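(* For all nonnegative integers $n$ and $k$, $$W_{m,r}[n,k]_q=\frac{1}{[k]_{q^m}!\,[m]_q^{k}}\sum_{j=0}^{k}(-1)^{k-j}\,q^{m\binom{k-j}{2}}\begin{bmatrix}k\\ j\end{bmatrix}_{q^m}[jm+r]_q^{\,n}.$$
   Context: Fix a real number $q>0$ with $q\neq 1$, a positive integer $m$ and a complex number $r$. For complex $x$ put $q^x=e^{x\ln q}$ and $[x]_q=\frac{1-q^x}{1-q}$. For $p>0$, $p\ne 1$ and integers $0\le j\le k$: $[i]_p=\frac{1-p^i}{1-p}$, $[k]_p!=\prod_{i=1}^{k}[i]_p$ (with $[0]_p!=1$), and $\begin{bmatrix}k\\ j\end{bmatrix}_p=\frac{[k]_p!}{[j]_p!\,[k-j]_p!}$. The numbers $W_{m,r}[n,k]_q$ (a $q$-analogue of the $r$-Whitney numbers of the second kind), for integers $n,k$, are defined by $W_{m,r}[0,0]_q=1$, $W_{m,r}[n,k]_q=0$ whenever $n<k$ or $n<0$ or $k<0$, and, for $n\ge 1$ and $0\le k\le n$, $$W_{m,r}[n,k]_q=q^{m(k-1)+r}\,W_{m,r}[n-1,k-1]_q+[mk+r]_q\,W_{m,r}[n-1,k]_q .$$ *)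

theory Defs
  imports "HOL-Analysis.Analysis"
begin

definition qpow :: "real \<Rightarrow> complex \<Rightarrow> complex" where
  "qpow q x = exp (x * complex_of_real (ln q))"

definition qnum :: "real \<Rightarrow> complex \<Rightarrow> complex" where
  "qnum q x = (1 - qpow q x) / (1 - complex_of_real q)"

definition qint :: "real \<Rightarrow> nat \<Rightarrow> real" where
  "qint p i = (1 - p ^ i) / (1 - p)"

definition qfact :: "real \<Rightarrow> nat \<Rightarrow> real" where
  "qfact p k = (\<Prod>i=1..k. qint p i)"

definition qbinom :: "real \<Rightarrow> nat \<Rightarrow> nat \<Rightarrow> real" where
  "qbinom p k j = qfact p k / (qfact p j * qfact p (k - j))"

text \<open>q-analogue of r-Whitney numbers of the second kind W_{m,r}[n,k]_q
  (for nonnegative n, k; values with negative index are 0).\<close>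
fun qW :: "real \<Rightarrow> nat \<Rightarrow> complex \<Rightarrow> nat \<Rightarrow> nat \<Rightarrow> complex" where
  "qW q m r 0 k = (if k = 0 then 1 else 0)"
| "qW q m r (Suc n) k =
     (if k > Suc n then 0
      else (if k = 0 then 0
            else qpow q (of_int (int m * (int k - 1)) + r) * qW q m r n (k - 1))
           + qnum q (of_nat (m * k) + r) * qW q m r n k)"

end

theory Submission
  imports Defs
begin

text \<open>Put \<open>p = q^m\<close> and \<open>Q = q^r\<close>. Then \<open>x_j = [jm+r]_q = (1 - Q p^j)/(1 - q)\<close> is affine in
  \<open>p^j\<close>. The signed coefficients \<open>c_k(j) = (-1)^(k-j) p^C(k-j,2) [k,j]_p\<close> satisfy a q-Pascal rule,
  so that \<open>\<Sum>_j c_k(j) = \<Prod>_(i<k) (1 - p^i)\<close>, which vanishes for \<open>k > 0\<close>, and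
  \<open>c_(k+1)(j) (p^(k+1) - p^j) = p^k (1 - p^(k+1)) c_k(j)\<close>. As \<open>x_j - x_(k+1)\<close> is a multiple of
  \<open>p^(k+1) - p^j\<close>, the second identity shows that the power sums \<open>\<Sum>_j c_k(j) x_j^n\<close>, divided by
  \<open>[k]_p! [m]_q^k\<close>, satisfy the defining recurrence of \<open>W_(m,r)[n,k]_q\<close>; the initial values agree
  by the first identity.\<close>

lemma real_power_ne_1:
  fixes p :: real
  assumes "p > 0" "p \<noteq> 1" "i > 0"
  shows "p ^ i \<noteq> 1"
  using assms power_eq_1_iff by fastforce

lemma qint_add:
  assumes "p \<noteq> 1"
  shows "qint p (a + b) = qint p a + p ^ a * qint p b"
  using assms unfolding qint_def by (simp add: power_add field_simps)

lemma qint_nonzero: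
  assumes "p > 0" "p \<noteq> 1" "i > 0"
  shows "qint p i \<noteq> 0"
  using real_power_ne_1[OF assms] assms(2) unfolding qint_def by simp

lemma qint_power_mult:
  assumes "q ^ m \<noteq> 1"
  shows "qint (q ^ m) j * qint q m = qint q (m * j)"
proof -
  have "q \<noteq> 1" using assms by auto
  then show ?thesis using assms unfolding qint_def by (simp add: power_mult)
qed

lemma qfact_0 [simp]: "qfact p 0 = 1"
  unfolding qfact_def by simp

lemma qfact_Suc: "qfact p (Suc k) = qfact p k * qint p (Suc k)"
  unfolding qfact_def by (simp add: prod.cl_ivl_Suc)

lemma qfact_nonzero:
  assumes "p > 0" "p \<noteq> 1"
  shows "qfact p k \<noteq> 0"
  using qint_nonzero[OF assms] unfolding qfact_def by auto

lemma qbinom_0_right: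
  assumes "p > 0" "p \<noteq> 1"
  shows "qbinom p k 0 = 1"
  using qfact_nonzero[OF assms] unfolding qbinom_def by simp

lemma qbinom_diag:
  assumes "p > 0" "p \<noteq> 1"
  shows "qbinom p k k = 1"
  using qfact_nonzero[OF assms] unfolding qbinom_def by simp

lemma qbinom_Suc_mult_qint_diff:
  assumes "p > 0" "p \<noteq> 1" "j \<le> K"
  shows "qbinom p (Suc K) j * qint p (Suc K - j) = qbinom p K j * qint p (Suc K)"
proof -
  have "Suc K - j = Suc (K - j)" using assms(3) by simp
  with qfact_nonzero[OF assms(1,2)] qint_nonzero[OF assms(1,2)] show ?thesis
    unfolding qbinom_def by (simp add: qfact_Suc field_simps)
qed

lemma qbinom_Suc_Suc_mult_qint:
  assumes "p > 0" "p \<noteq> 1" "i \<le> K"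
  shows "qbinom p (Suc K) (Suc i) * qint p (Suc i) = qbinom p K i * qint p (Suc K)"
proof -
  have "Suc K - Suc i = K - i" by simp
  with qfact_nonzero[OF assms(1,2)] qint_nonzero[OF assms(1,2)] show ?thesis
    unfolding qbinom_def by (simp add: qfact_Suc field_simps)
qed

text \<open>The q-Pascal rule follows from the two preceding identities because
  \<open>[K+1]_p = [j]_p + p^j [K+1-j]_p\<close>.\<close>

lemma qbinom_Suc_pascal:
  assumes "p > 0" "p \<noteq> 1" "1 \<le> j" "j \<le> K"
  shows "qbinom p (Suc K) j = qbinom p K (j - 1) + p ^ j * qbinom p K j"
proof -
  obtain i where i: "j = Suc i" using assms(3) by (cases j) auto
  have split: "qint p (Suc K) = qint p j + p ^ j * qint p (Suc K - j)"
    using qint_add[OF assms(2), of j "Suc K - j"] assms(4) by simp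
  have "qbinom p (Suc K) j * qint p (Suc K)
      = qbinom p (Suc K) j * qint p j + p ^ j * (qbinom p (Suc K) j * qint p (Suc K - j))"
    unfolding split by (simp add: algebra_simps)
  also have "\<dots> = (qbinom p K (j - 1) + p ^ j * qbinom p K j) * qint p (Suc K)"
    using qbinom_Suc_Suc_mult_qint[OF assms(1,2), of i K] qbinom_Suc_mult_qint_diff[OF assms(1,2,4)]
      assms i by (simp add: algebra_simps)
  finally show ?thesis using qint_nonzero[OF assms(1,2), of "Suc K"] by simp
qed

definition qwhitney_coeff :: "real \<Rightarrow> nat \<Rightarrow> nat \<Rightarrow> real" where
  "qwhitney_coeff p k j = (-1) ^ (k - j) * p ^ ((k - j) choose 2) * qbinom p k j"

lemma choose_two_Suc: "Suc n choose 2 = (n choose 2) + n"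
  by (simp add: numeral_2_eq_2)

lemma qwhitney_coeff_Suc:
  assumes "p > 0" "p \<noteq> 1" "j \<le> Suc K"
  shows "qwhitney_coeff p (Suc K) j = (if j = 0 then 0 else qwhitney_coeff p K (j - 1))
           - (if j = Suc K then 0 else p ^ K * qwhitney_coeff p K j)"
proof -
  consider "j = 0" | "j = Suc K" | "1 \<le> j" "j \<le> K" using assms(3) by linarith
  then show ?thesis
  proof cases
    case 1
    then show ?thesis using qbinom_0_right[OF assms(1,2)]
      unfolding qwhitney_coeff_def by (simp add: choose_two_Suc power_add)
  next
    case 2
    then show ?thesis using qbinom_diag[OF assms(1,2)] unfolding qwhitney_coeff_def by simp
  next
    case 3
    have diff: "Suc K - j = Suc (K - j)" "K - (j - 1) = Suc (K - j)" using 3 by auto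
    have pow: "p ^ K = p ^ j * p ^ (K - j)" using 3 by (simp flip: power_add)
    have "j \<noteq> 0" "j \<noteq> Suc K" using 3 by auto
    then show ?thesis
      unfolding qwhitney_coeff_def qbinom_Suc_pascal[OF assms(1,2) 3] diff choose_two_Suc pow
      by (simp add: power_add algebra_simps)
  qed
qed

lemma sum_qwhitney_coeff:
  assumes "p > 0" "p \<noteq> 1"
  shows "(\<Sum>j=0..k. qwhitney_coeff p k j) = (\<Prod>i<k. 1 - p ^ i)"
proof (induction k)
  case 0
  then show ?case by (simp add: qwhitney_coeff_def qbinom_diag[OF assms] numeral_2_eq_2)
next
  case (Suc K)
  have "(\<Sum>j=0..Suc K. qwhitney_coeff p (Suc K) j)
      = (\<Sum>j=0..Suc K. if j = 0 then 0 else qwhitney_coeff p K (j - 1))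
        - (\<Sum>j=0..Suc K. if j = Suc K then 0 else p ^ K * qwhitney_coeff p K j)"
    unfolding sum_subtractf[symmetric] using qwhitney_coeff_Suc[OF assms]
    by (intro sum.cong) auto
  also have "(\<Sum>j=0..Suc K. if j = 0 then 0 else qwhitney_coeff p K (j - 1))
      = (\<Sum>j=0..K. qwhitney_coeff p K j)"
    by (subst sum.atLeast0_atMost_Suc_shift) simp
  also have "(\<Sum>j=0..Suc K. if j = Suc K then 0 else p ^ K * qwhitney_coeff p K j)
      = p ^ K * (\<Sum>j=0..K. qwhitney_coeff p K j)"
    by (subst sum.atLeast0_atMost_Suc) (simp add: sum_distrib_left)
  finally show ?case using Suc.IH by (simp add: algebra_simps)
qed

lemma qwhitney_coeff_Suc_mult_diff:
  assumes "p > 0" "p \<noteq> 1" "j \<le> K"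
  shows "qwhitney_coeff p (Suc K) j * (p ^ Suc K - p ^ j)
       = p ^ K * (1 - p ^ Suc K) * qwhitney_coeff p K j"
proof -
  define c where "c = (-1) ^ (K - j) * p ^ ((K - j) choose 2) * p ^ (K - j)"
  have Suc_diff: "Suc K - j = Suc (K - j)" using assms(3) by simp
  have "p ^ Suc K = p ^ j * p ^ Suc (K - j)" "p ^ K = p ^ j * p ^ (K - j)"
    using assms(3) by (simp_all flip: power_add)
  then have "qwhitney_coeff p (Suc K) j * (p ^ Suc K - p ^ j)
      = c * p ^ j * (qbinom p (Suc K) j * (1 - p ^ Suc (K - j)))"
    unfolding qwhitney_coeff_def c_def Suc_diff choose_two_Suc by (simp add: power_add algebra_simps)
  also have "qbinom p (Suc K) j * (1 - p ^ Suc (K - j)) = qbinom p K j * (1 - p ^ Suc K)"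
    using qbinom_Suc_mult_qint_diff[OF assms] Suc_diff assms(2)
    unfolding qint_def by (simp add: field_simps)
  also have "c * p ^ j * (qbinom p K j * (1 - p ^ Suc K))
      = p ^ K * (1 - p ^ Suc K) * qwhitney_coeff p K j"
    unfolding qwhitney_coeff_def c_def \<open>p ^ K = _\<close> by (simp add: algebra_simps)
  finally show ?thesis .
qed

lemma qwhitney_power_sum_Suc:
  fixes x :: "nat \<Rightarrow> 'a::real_field"
  assumes "p > 0" "p \<noteq> 1" and x: "\<And>j. x j = a + b * of_real (p ^ j)"
  shows "(\<Sum>j=0..Suc K. of_real (qwhitney_coeff p (Suc K) j) * x j ^ Suc n)
       = x (Suc K) * (\<Sum>j=0..Suc K. of_real (qwhitney_coeff p (Suc K) j) * x j ^ n)
         - b * of_real (p ^ K * (1 - p ^ Suc K)) * (\<Sum>j=0..K. of_real (qwhitney_coeff p K j) * x j ^ n)"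
proof -
  have diff: "x j - x (Suc K) = - b * of_real (p ^ Suc K - p ^ j)" for j
    unfolding x of_real_diff by (simp add: algebra_simps)
  have "(\<Sum>j=0..Suc K. of_real (qwhitney_coeff p (Suc K) j) * x j ^ Suc n)
        - x (Suc K) * (\<Sum>j=0..Suc K. of_real (qwhitney_coeff p (Suc K) j) * x j ^ n)
      = (\<Sum>j=0..Suc K. of_real (qwhitney_coeff p (Suc K) j) * x j ^ n * (x j - x (Suc K)))"
    by (simp add: sum_distrib_left sum_subtractf[symmetric] algebra_simps)
  also have "\<dots> = (\<Sum>j=0..K. of_real (qwhitney_coeff p (Suc K) j) * x j ^ n * (x j - x (Suc K)))"
    by (simp add: sum.atLeast0_atMost_Suc)
  also have "\<dots> = (\<Sum>j=0..K. - b * of_real (qwhitney_coeff p (Suc K) j * (p ^ Suc K - p ^ j)) * x j ^ n)"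
    by (intro sum.cong refl) (simp add: diff mult_ac)
  also have "\<dots> = (\<Sum>j=0..K. - b * of_real (p ^ K * (1 - p ^ Suc K)) * (of_real (qwhitney_coeff p K j) * x j ^ n))"
    by (intro sum.cong refl, subst qwhitney_coeff_Suc_mult_diff[OF assms(1,2)]) auto
  also have "\<dots> = - b * of_real (p ^ K * (1 - p ^ Suc K)) * (\<Sum>j=0..K. of_real (qwhitney_coeff p K j) * x j ^ n)"
    by (simp add: sum_distrib_left)
  finally show ?thesis by (simp add: algebra_simps)
qed

lemma qpow_of_nat:
  assumes "q > 0"
  shows "qpow q (of_nat n) = of_real (q ^ n)"
proof -
  have "exp (complex_of_real (ln q)) = complex_of_real q"
    using assms by (metis exp_ln exp_of_real)
  then show ?thesis unfolding qpow_def exp_of_nat_mult by simp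
qed

lemma qpow_add: "qpow q (a + b) = qpow q a * qpow q b"
  unfolding qpow_def by (simp add: distrib_right exp_add)

lemma qnum_of_nat:
  assumes "q > 0"
  shows "qnum q (of_nat n) = of_real (qint q n)"
  unfolding qnum_def qint_def qpow_of_nat[OF assms] by simp

lemma qnum_of_nat_mult_add:
  assumes "q > 0"
  shows "qnum q (of_nat (j * m) + r)
       = 1 / (1 - of_real q) + - qpow q r / (1 - of_real q) * of_real ((q ^ m) ^ j)"
proof -
  have "qpow q (of_nat (j * m)) = of_real ((q ^ m) ^ j)"
    by (simp only: qpow_of_nat[OF assms]) (simp add: power_mult[symmetric] mult.commute)
  then show ?thesis unfolding qnum_def qpow_add by (simp add: diff_divide_distrib)
qed

definition qW_closed :: "real \<Rightarrow> nat \<Rightarrow> complex \<Rightarrow> nat \<Rightarrow> nat \<Rightarrow> complex" where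
  "qW_closed q m r n k =
     (\<Sum>j=0..k. of_real (qwhitney_coeff (q ^ m) k j) * qnum q (of_nat (j * m) + r) ^ n)
     / (of_real (qfact (q ^ m) k) * qnum q (of_nat m) ^ k)"

lemma qW_closed_0_right: "qW_closed q m r n 0 = qnum q r ^ n"
  unfolding qW_closed_def qwhitney_coeff_def qbinom_def by (simp add: numeral_2_eq_2)

lemma qW_closed_0_left:
  assumes "q > 0" "q \<noteq> 1" "m > 0" "k > 0"
  shows "qW_closed q m r 0 k = 0"
proof -
  have p: "q ^ m > 0" "q ^ m \<noteq> 1" using assms real_power_ne_1 by auto
  have "(\<Prod>i<k. 1 - (q ^ m) ^ i) = 0"
    using assms(4) by (intro prod_zero bexI[of _ 0]) auto
  then have "(\<Sum>j=0..k. qwhitney_coeff (q ^ m) k j) = 0"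
    by (simp only: sum_qwhitney_coeff[OF p])
  then have "(\<Sum>j=0..k. complex_of_real (qwhitney_coeff (q ^ m) k j)) = 0"
    by (metis of_real_0 of_real_sum)
  then show ?thesis unfolding qW_closed_def by simp
qed

lemma qW_closed_Suc_Suc:
  assumes q: "q > 0" "q \<noteq> 1" and "m > 0"
  shows "qW_closed q m r (Suc n) (Suc K) =
     qpow q (of_int (int m * (int (Suc K) - 1)) + r) * qW_closed q m r n K
     + qnum q (of_nat (m * Suc K) + r) * qW_closed q m r n (Suc K)"
proof -
  define p where "p = q ^ m"
  have p: "p > 0" "p \<noteq> 1" using assms real_power_ne_1 unfolding p_def by auto
  define x where "x j = qnum q (of_nat (j * m) + r)" for j
  have x_affine: "x j = 1 / (1 - of_real q) + - qpow q r / (1 - of_real q) * of_real (p ^ j)" for j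
    unfolding x_def p_def by (rule qnum_of_nat_mult_add[OF q(1)])
  define S where "S n k = (\<Sum>j=0..k. of_real (qwhitney_coeff p k j) * x j ^ n)" for n k
  define den where "den k = of_real (qfact p k) * qnum q (of_nat m) ^ k" for k
  have closed: "qW_closed q m r n k = S n k / den k" for n k
    unfolding qW_closed_def S_def den_def x_def p_def ..
  have "- (- qpow q r / (1 - of_real q)) * of_real (p ^ K * (1 - p ^ Suc K))
      = qpow q r * of_real (p ^ K) * of_real (qint q (m * Suc K))"
    using q(2) unfolding qint_def p_def by (simp add: power_add power_mult)
  then have S_Suc: "S (Suc n) (Suc K) = x (Suc K) * S n (Suc K)
      + qpow q r * of_real (p ^ K) * of_real (qint q (m * Suc K)) * S n K"
    using qwhitney_power_sum_Suc[OF p x_affine, of K n, folded S_def] by simp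
  have den_Suc: "den (Suc K) = den K * of_real (qint q (m * Suc K))"
    unfolding den_def p_def qfact_Suc qnum_of_nat[OF q(1)]
      qint_power_mult[OF p(2)[unfolded p_def], symmetric] by simp
  have "den K \<noteq> 0" "qint q (m * Suc K) \<noteq> 0"
    using qfact_nonzero[OF p] qint_nonzero[OF q] assms(3)
    unfolding den_def qnum_of_nat[OF q(1)] by auto
  moreover have "qpow q (of_int (int m * (int (Suc K) - 1)) + r) = of_real (p ^ K) * qpow q r"
    unfolding qpow_add p_def power_mult[symmetric] qpow_of_nat[OF q(1), symmetric] by simp
  moreover have "qnum q (of_nat (m * Suc K) + r) = x (Suc K)"
    unfolding x_def by (simp add: mult.commute)
  ultimately show ?thesis
    unfolding closed S_Suc den_Suc by (simp add: field_simps)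
qed

lemma qW_eq_0: "n < k \<Longrightarrow> qW q m r n k = 0"
  by (induction n arbitrary: k) auto

lemma qW_Suc_Suc:
  "qW q m r (Suc n) (Suc K) =
     qpow q (of_int (int m * (int (Suc K) - 1)) + r) * qW q m r n K
     + qnum q (of_nat (m * Suc K) + r) * qW q m r n (Suc K)"
  using qW_eq_0[of n K] qW_eq_0[of n "Suc K"] by auto

theorem theorem3:
  fixes q :: real and m :: nat and r :: complex and n k :: nat
  assumes "q > 0" and "q \<noteq> 1" and "m > 0"
  shows "qW q m r n k =
    (1 / (complex_of_real (qfact (q ^ m) k) * qnum q (of_nat m) ^ k)) *
    (\<Sum>j=0..k. (-1) ^ (k - j) * complex_of_real (q ^ (m * ((k - j) choose 2)))
       * complex_of_real (qbinom (q ^ m) k j) * qnum q (of_nat (j * m) + r) ^ n)"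
proof -
  have "qW q m r n k = qW_closed q m r n k"
  proof (induction n arbitrary: k)
    case 0
    show ?case
      using qW_closed_0_left[OF assms] by (cases k) (simp_all add: qW_closed_0_right)
  next
    case (Suc n)
    note IH = Suc.IH
    show ?case
    proof (cases k)
      case 0
      then show ?thesis using IH by (simp add: qW_closed_0_right)
    next
      case (Suc K)
      show ?thesis
        using IH unfolding \<open>k = Suc K\<close> qW_Suc_Suc qW_closed_Suc_Suc[OF assms] by simp
    qed
  qed
  then show ?thesis
    unfolding qW_closed_def qwhitney_coeff_def by (simp add: power_mult)
qed

end
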